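(* Let $G$ be a group (as an algebra with multiplication, inverse and identity) and $K,H\trianglelefteq G$ normal subgroups with $K\le H$. Then: (1) there is a homomorphism $\phi:G/H\to\operatorname{Aut}(K/[K,H])$ such that $G(\alpha_K)/\Delta_{\alpha_K\alpha_H}\cong K/[K,H]\rtimes_\phi G/H$; (2) $G(\alpha_K)/\Delta_{\alpha_K 1}\cong K/[K,G]$. Here $[K,H]$ is the usual group commutator subgroup.
   Context: For a normal subgroup $N\trianglelefteq G$, $\alpha_N=\{(x,y)\in G^2:xy^{-1}\in N\}$ is the corresponding congruence; $1$ denotes the total congruence of $G$. For a congruence $\alpha$ of an algebra $A$, $A(\alpha)=\{(x,y)\in A\times A:(x,y)\in\alpha\}$ is $\alpha$ viewed as a subalgebra of $A\times A$, and for a congruence $\beta$, $\Delta_{\alpha\beta}$ is the congruence of $A(\alpha)$ generated by $\{((u,u),(v,v)):(u,v)\in\beta\}$. For a homomorphism $\phi:Q\to\operatorname{Aut}(N)$, $N\rtimes_\phi Q$ is the semidirect product on $N\times Q$ with $(a,x)(b,y)=(a\,\phi(x)(b),xy)$. *)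

theory Defs
  imports "HOL-Algebra.Algebra"
begin

definition grp_cong :: "('a, 'b) monoid_scheme \<Rightarrow> ('a \<times> 'a) set \<Rightarrow> bool" where
  "grp_cong G R \<longleftrightarrow> equiv (carrier G) R
     \<and> (\<forall>a b c d. (a, b) \<in> R \<longrightarrow> (c, d) \<in> R \<longrightarrow> (a \<otimes>\<^bsub>G\<^esub> c, b \<otimes>\<^bsub>G\<^esub> d) \<in> R)
     \<and> (\<forall>a b. (a, b) \<in> R \<longrightarrow> (inv\<^bsub>G\<^esub> a, inv\<^bsub>G\<^esub> b) \<in> R)"

definition cong_gen :: "('a, 'b) monoid_scheme \<Rightarrow> ('a \<times> 'a) set \<Rightarrow> ('a \<times> 'a) set" where
  "cong_gen G S = \<Inter>{R. grp_cong G R \<and> S \<subseteq> R}"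

definition alpha_N :: "('a, 'b) monoid_scheme \<Rightarrow> 'a set \<Rightarrow> ('a \<times> 'a) set" where
  "alpha_N G N = {(x, y). x \<in> carrier G \<and> y \<in> carrier G \<and> x \<otimes>\<^bsub>G\<^esub> inv\<^bsub>G\<^esub> y \<in> N}"

definition total_cong :: "('a, 'b) monoid_scheme \<Rightarrow> ('a \<times> 'a) set" where
  "total_cong G = carrier G \<times> carrier G"

definition cong_alg :: "('a, 'b) monoid_scheme \<Rightarrow> ('a \<times> 'a) set \<Rightarrow> ('a \<times> 'a) monoid" where
  "cong_alg G \<alpha> = (G \<times>\<times> G) \<lparr>carrier := \<alpha>\<rparr>"

definition Delta :: "('a, 'b) monoid_scheme \<Rightarrow> ('a \<times> 'a) set \<Rightarrow> ('a \<times> 'a) set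
                      \<Rightarrow> (('a \<times> 'a) \<times> ('a \<times> 'a)) set" where
  "Delta G \<alpha> \<beta> = cong_gen (cong_alg G \<alpha>) {((u, u), (v, v)) | u v. (u, v) \<in> \<beta>}"

definition quot_alg :: "('a, 'b) monoid_scheme \<Rightarrow> ('a \<times> 'a) set \<Rightarrow> 'a set monoid" where
  "quot_alg G \<theta> = \<lparr> carrier = carrier G // \<theta>,
     monoid.mult = (\<lambda>A B. \<theta> `` {u \<otimes>\<^bsub>G\<^esub> v | u v. u \<in> A \<and> v \<in> B}),
     monoid.one = \<theta> `` {\<one>\<^bsub>G\<^esub>} \<rparr>"

definition commutator :: "('a, 'b) monoid_scheme \<Rightarrow> 'a set \<Rightarrow> 'a set \<Rightarrow> 'a set" where
  "commutator G K H = generate G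
     {inv\<^bsub>G\<^esub> k \<otimes>\<^bsub>G\<^esub> inv\<^bsub>G\<^esub> h \<otimes>\<^bsub>G\<^esub> k \<otimes>\<^bsub>G\<^esub> h | k h. k \<in> K \<and> h \<in> H}"

definition semidirect :: "('n, 'c) monoid_scheme \<Rightarrow> ('q, 'd) monoid_scheme \<Rightarrow> ('q \<Rightarrow> 'n \<Rightarrow> 'n)
                           \<Rightarrow> ('n \<times> 'q) monoid" where
  "semidirect N Q \<phi> = \<lparr> carrier = carrier N \<times> carrier Q,
     monoid.mult = (\<lambda>(a, x) (b, y). (a \<otimes>\<^bsub>N\<^esub> \<phi> x b, x \<otimes>\<^bsub>Q\<^esub> y)),
     monoid.one = (\<one>\<^bsub>N\<^esub>, \<one>\<^bsub>Q\<^esub>) \<rparr>"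

end

theory Submission
  imports Defs
begin

text \<open>
  Let \<open>A = G(\<alpha>\<^sub>K) = {(x, y). x y\<inverse> \<in> K}\<close>, a subgroup of \<open>G \<times> G\<close>. The map
  \<open>(x, y) \<mapsto> (x y\<inverse> [K,H], y H)\<close> is a surjective homomorphism from \<open>A\<close> onto
  \<open>K/[K,H] \<rtimes> G/H\<close>, where \<open>G/H\<close> acts on \<open>K/[K,H]\<close> by conjugation; the action is well
  defined because conjugation by an element of \<open>H\<close> is trivial modulo \<open>[K,H]\<close>.
  Its kernel is generated by the pairs \<open>((u, u), (1, 1))\<close> with \<open>u \<in> H\<close> together with
  the pairs \<open>((c, 1), (1, 1))\<close> with \<open>c \<in> [K,H]\<close>, and the latter lie in every congruence
  containing the former, since \<open>(k\<inverse>, 1)(h\<inverse>, h\<inverse>)(k, 1)(h, h) = (k\<inverse>h\<inverse>kh, 1)\<close>.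
  So the kernel is \<open>\<Delta>\<^sub>\<alpha>\<^sub>K\<^sub>\<alpha>\<^sub>H\<close>, and the first isomorphism theorem gives (1).
  For \<open>H = G\<close> the group \<open>G/H\<close> is trivial, so the semidirect product collapses to
  \<open>K/[K,G]\<close>, which gives (2).
\<close>

subsection \<open>Kernel congruences\<close>

definition kernel_rel :: "('a, 'b) monoid_scheme \<Rightarrow> ('a \<Rightarrow> 'c) \<Rightarrow> ('a \<times> 'a) set" where
  "kernel_rel A f = {(p, q). p \<in> carrier A \<and> q \<in> carrier A \<and> f p = f q}"

lemma grp_cong_kernel_rel:
  assumes A: "group A" and f: "f \<in> hom A T"
  shows "grp_cong A (kernel_rel A f)"
proof -
  interpret A: group A by fact
  have fm: "\<And>x y. x \<in> carrier A \<Longrightarrow> y \<in> carrier A \<Longrightarrow> f (x \<otimes>\<^bsub>A\<^esub> y) = f x \<otimes>\<^bsub>T\<^esub> f y"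
    using f by (simp add: hom_def)
  have inv: "f (inv\<^bsub>A\<^esub> p) = f (inv\<^bsub>A\<^esub> q)"
    if p: "p \<in> carrier A" and q: "q \<in> carrier A" and e: "f p = f q" for p q
  proof -
    have "f (inv\<^bsub>A\<^esub> p) = f (inv\<^bsub>A\<^esub> p \<otimes>\<^bsub>A\<^esub> q \<otimes>\<^bsub>A\<^esub> inv\<^bsub>A\<^esub> q)"
      using p q by (simp add: A.m_assoc)
    also have "\<dots> = (f (inv\<^bsub>A\<^esub> p) \<otimes>\<^bsub>T\<^esub> f q) \<otimes>\<^bsub>T\<^esub> f (inv\<^bsub>A\<^esub> q)"
      using p q by (simp add: fm)
    also have "\<dots> = (f (inv\<^bsub>A\<^esub> p) \<otimes>\<^bsub>T\<^esub> f p) \<otimes>\<^bsub>T\<^esub> f (inv\<^bsub>A\<^esub> q)"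
      using e by simp
    also have "\<dots> = f (inv\<^bsub>A\<^esub> p \<otimes>\<^bsub>A\<^esub> p \<otimes>\<^bsub>A\<^esub> inv\<^bsub>A\<^esub> q)"
      using p q fm[of "inv\<^bsub>A\<^esub> p \<otimes>\<^bsub>A\<^esub> p" "inv\<^bsub>A\<^esub> q"] fm[of "inv\<^bsub>A\<^esub> p" p] by simp
    also have "\<dots> = f (inv\<^bsub>A\<^esub> q)"
      using p q by simp
    finally show ?thesis .
  qed
  show ?thesis
    unfolding grp_cong_def kernel_rel_def
    by (auto simp: equiv_def refl_on_def sym_def trans_def fm inv)
qed

lemma quot_alg_kernel_rel_iso:
  assumes A: "group A" and f: "f \<in> hom A T" and surj: "f ` carrier A = carrier T"
  shows "quot_alg A (kernel_rel A f) \<cong> T"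
proof -
  interpret A: group A by fact
  let ?R = "kernel_rel A f"
  have fm: "\<And>x y. x \<in> carrier A \<Longrightarrow> y \<in> carrier A \<Longrightarrow> f (x \<otimes>\<^bsub>A\<^esub> y) = f x \<otimes>\<^bsub>T\<^esub> f y"
    using f by (simp add: hom_def)
  have kernel_class: "?R `` {p} = {q \<in> carrier A. f q = f p}" if "p \<in> carrier A" for p
    using that by (auto simp: kernel_rel_def)
  define F where "F = (\<lambda>W. the_elem (f ` W))"
  have F: "F (?R `` {p}) = f p" if "p \<in> carrier A" for p
  proof -
    have "f ` (?R `` {p}) = {f p}"
      using that by (auto simp: kernel_class)
    then show ?thesis
      by (simp add: F_def)
  qed
  have class_mult: "?R `` {u \<otimes>\<^bsub>A\<^esub> v | u v. u \<in> ?R `` {p} \<and> v \<in> ?R `` {q}} = ?R `` {p \<otimes>\<^bsub>A\<^esub> q}"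
    if p: "p \<in> carrier A" and q: "q \<in> carrier A" for p q
  proof -
    let ?P = "{u \<otimes>\<^bsub>A\<^esub> v | u v. u \<in> ?R `` {p} \<and> v \<in> ?R `` {q}}"
    have p_q: "p \<in> ?R `` {p}" "q \<in> ?R `` {q}"
      using p q by (auto simp: kernel_class)
    have P: "f z = f (p \<otimes>\<^bsub>A\<^esub> q) \<and> z \<in> carrier A" if z: "z \<in> ?P" for z
    proof -
      obtain u v where uv: "z = u \<otimes>\<^bsub>A\<^esub> v" "u \<in> carrier A" "v \<in> carrier A"
        and f_uv: "f u = f p" "f v = f q"
        using z unfolding kernel_class[OF p] kernel_class[OF q] by blast
      have "f z = f u \<otimes>\<^bsub>T\<^esub> f v"
        unfolding uv(1) using uv(2,3) by (rule fm)
      also have "\<dots> = f (p \<otimes>\<^bsub>A\<^esub> q)"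
        unfolding f_uv using p q by (rule fm[symmetric])
      finally show ?thesis
        using uv by simp
    qed
    have "?R `` ?P \<subseteq> ?R `` {p \<otimes>\<^bsub>A\<^esub> q}"
    proof
      fix w assume "w \<in> ?R `` ?P"
      then obtain z where "z \<in> ?P" "(z, w) \<in> ?R"
        by blast
      with P[of z] show "w \<in> ?R `` {p \<otimes>\<^bsub>A\<^esub> q}"
        using p q by (simp add: kernel_rel_def)
    qed
    moreover have "?R `` {p \<otimes>\<^bsub>A\<^esub> q} \<subseteq> ?R `` ?P"
      using p_q by blast
    ultimately show ?thesis
      by (rule equalityI)
  qed
  have car: "carrier (quot_alg A ?R) = (\<lambda>p. ?R `` {p}) ` carrier A"
    by (auto simp: quot_alg_def quotient_def)
  have hom: "F \<in> hom (quot_alg A ?R) T"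
  proof (rule homI)
    fix U assume "U \<in> carrier (quot_alg A ?R)"
    then show "F U \<in> carrier T"
      using surj F unfolding car by blast
  next
    fix U V assume "U \<in> carrier (quot_alg A ?R)" "V \<in> carrier (quot_alg A ?R)"
    then obtain p q where p: "p \<in> carrier A" "U = ?R `` {p}" and q: "q \<in> carrier A" "V = ?R `` {q}"
      unfolding car by blast
    then show "F (U \<otimes>\<^bsub>quot_alg A ?R\<^esub> V) = F U \<otimes>\<^bsub>T\<^esub> F V"
      using class_mult[OF p(1) q(1)] by (simp add: quot_alg_def F fm)
  qed
  have "inj_on F (carrier (quot_alg A ?R))"
  proof (rule inj_onI)
    fix U V assume "U \<in> carrier (quot_alg A ?R)" "V \<in> carrier (quot_alg A ?R)" "F U = F V"
    then obtain p q where "p \<in> carrier A" "U = ?R `` {p}" "q \<in> carrier A" "V = ?R `` {q}" "f p = f q"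
      unfolding car using F by auto
    then show "U = V"
      by (simp add: kernel_class)
  qed
  moreover have "F ` carrier (quot_alg A ?R) = carrier T"
    using surj by (auto simp: car F image_image)
  ultimately have "F \<in> iso (quot_alg A ?R) T"
    using hom by (simp add: iso_def bij_betw_def)
  then show ?thesis
    unfolding is_iso_def by blast
qed

lemma cong_gen_eqI:
  assumes "grp_cong G R" "S \<subseteq> R" "\<And>R'. grp_cong G R' \<Longrightarrow> S \<subseteq> R' \<Longrightarrow> R \<subseteq> R'"
  shows "cong_gen G S = R"
  using assms unfolding cong_gen_def by blast

subsection \<open>Cosets and commutators\<close>

lemma (in group) inv_mult_cancel_left [simp]:
  "x \<in> carrier G \<Longrightarrow> y \<in> carrier G \<Longrightarrow> inv x \<otimes> (x \<otimes> y) = y"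
  by (simp add: m_assoc[symmetric])

lemma (in group) mult_inv_cancel_left [simp]:
  "x \<in> carrier G \<Longrightarrow> y \<in> carrier G \<Longrightarrow> x \<otimes> (inv x \<otimes> y) = y"
  by (simp add: m_assoc[symmetric])

lemma (in group) rcos_eq_iff:
  assumes "subgroup N G" "x \<in> carrier G" "y \<in> carrier G"
  shows "N #> x = N #> y \<longleftrightarrow> x \<otimes> inv y \<in> N"
proof
  assume "N #> x = N #> y"
  then have "x \<in> N #> y"
    using rcos_self[OF assms(2,1)] by simp
  then show "x \<otimes> inv y \<in> N"
    using subgroup.rcos_module[OF assms(1) is_group assms(3,2)] by blast
next
  assume "x \<otimes> inv y \<in> N"
  then have "x \<in> N #> y"
    using subgroup.rcos_module[OF assms(1) is_group assms(3,2)] by blast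
  then show "N #> x = N #> y"
    using repr_independence[OF _ assms(3,1)] by simp
qed

lemma commutator_mem:
  "k \<in> K \<Longrightarrow> h \<in> H \<Longrightarrow> inv\<^bsub>G\<^esub> k \<otimes>\<^bsub>G\<^esub> inv\<^bsub>G\<^esub> h \<otimes>\<^bsub>G\<^esub> k \<otimes>\<^bsub>G\<^esub> h \<in> commutator G K H"
  unfolding commutator_def by (rule generate.incl) blast

lemma (in group) commutator_subset_subgroup:
  assumes "subgroup S G" "\<And>k h. k \<in> K \<Longrightarrow> h \<in> H \<Longrightarrow> inv k \<otimes> inv h \<otimes> k \<otimes> h \<in> S"
  shows "commutator G K H \<subseteq> S"
  unfolding commutator_def using assms by (intro generate_subgroup_incl) blast+

lemma (in group) subgroup_commutator:
  assumes "K \<subseteq> carrier G" "H \<subseteq> carrier G"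
  shows "subgroup (commutator G K H) G"
  unfolding commutator_def using assms by (intro generate_is_subgroup) blast

lemma (in group) commutator_subset_left:
  assumes K: "K \<lhd> G" and H: "H \<subseteq> carrier G"
  shows "commutator G K H \<subseteq> K"
proof (rule commutator_subset_subgroup)
  interpret K: normal K G by fact
  show "subgroup K G" by (rule K.subgroup_axioms)
  fix k h assume k: "k \<in> K" and h: "h \<in> H"
  then have "inv k \<otimes> (inv h \<otimes> k \<otimes> h) \<in> K"
    using H K.inv_op_closed1 by auto
  moreover have "k \<in> carrier G" "h \<in> carrier G"
    using k h H K.subset by auto
  ultimately show "inv k \<otimes> inv h \<otimes> k \<otimes> h \<in> K"
    by (simp add: m_assoc)
qed

lemma (in group) normal_commutator:
  assumes K: "K \<lhd> G" and H: "H \<lhd> G"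
  shows "commutator G K H \<lhd> G"
proof -
  interpret K: normal K G by fact
  interpret H: normal H G by fact
  let ?C = "commutator G K H"
  have C: "subgroup ?C G"
    by (rule subgroup_commutator) auto
  show ?thesis
  proof (rule normal_invI[OF C])
    fix x c assume x: "x \<in> carrier G" and c: "c \<in> ?C"
    define S where "S = {y \<in> carrier G. x \<otimes> y \<otimes> inv x \<in> ?C}"
    have "subgroup S G"
    proof (rule subgroupI)
      show "S \<subseteq> carrier G" "S \<noteq> {}"
        using x subgroup.one_closed[OF C] by (auto simp: S_def intro!: exI[of _ \<one>])
    next
      fix a assume a: "a \<in> S"
      have "inv (x \<otimes> a \<otimes> inv x) = x \<otimes> inv a \<otimes> inv x"
        using a x by (simp add: S_def inv_mult_group m_assoc)
      then show "inv a \<in> S"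
        using a subgroup.m_inv_closed[OF C, of "x \<otimes> a \<otimes> inv x"] by (simp add: S_def)
    next
      fix a b assume a: "a \<in> S" and b: "b \<in> S"
      have "(x \<otimes> a \<otimes> inv x) \<otimes> (x \<otimes> b \<otimes> inv x) = x \<otimes> (a \<otimes> b) \<otimes> inv x"
        using a b x by (simp add: S_def m_assoc)
      then show "a \<otimes> b \<in> S"
        using a b subgroup.m_closed[OF C, of "x \<otimes> a \<otimes> inv x" "x \<otimes> b \<otimes> inv x"] by (simp add: S_def)
    qed
    moreover have "inv k \<otimes> inv h \<otimes> k \<otimes> h \<in> S" if k: "k \<in> K" and h: "h \<in> H" for k h
    proof -
      have "x \<otimes> (inv k \<otimes> inv h \<otimes> k \<otimes> h) \<otimes> inv x
          = inv (x \<otimes> k \<otimes> inv x) \<otimes> inv (x \<otimes> h \<otimes> inv x) \<otimes> (x \<otimes> k \<otimes> inv x) \<otimes> (x \<otimes> h \<otimes> inv x)"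
        using x k h by (simp add: inv_mult_group m_assoc)
      then show ?thesis
        using x k h commutator_mem[OF K.inv_op_closed2 H.inv_op_closed2] by (simp add: S_def)
    qed
    ultimately have "?C \<subseteq> S"
      by (rule commutator_subset_subgroup)
    then show "x \<otimes> c \<otimes> inv x \<in> ?C"
      using c by (auto simp: S_def)
  qed
qed

subsection \<open>The subgroup \<open>G(\<alpha>\<^sub>N)\<close> of \<open>G \<times> G\<close>\<close>

lemma carrier_cong_alg [simp]: "carrier (cong_alg G \<alpha>) = \<alpha>"
  by (simp add: cong_alg_def)

lemma cong_alg_mult [simp]: "(a, b) \<otimes>\<^bsub>cong_alg G \<alpha>\<^esub> (c, d) = (a \<otimes>\<^bsub>G\<^esub> c, b \<otimes>\<^bsub>G\<^esub> d)"
  by (simp add: cong_alg_def DirProd_def)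

lemma (in group) mem_alpha_N_iff:
  "(x, y) \<in> alpha_N G N \<longleftrightarrow> x \<in> carrier G \<and> y \<in> carrier G \<and> x \<otimes> inv y \<in> N"
  by (simp add: alpha_N_def)

lemma (in group) subgroup_alpha_N:
  assumes "N \<lhd> G"
  shows "subgroup (alpha_N G N) (G \<times>\<times> G)"
proof -
  interpret N: normal N G by fact
  interpret GG: group "G \<times>\<times> G"
    using DirProd_group is_group by blast
  show ?thesis
  proof (rule GG.subgroupI)
    show "alpha_N G N \<subseteq> carrier (G \<times>\<times> G)" "alpha_N G N \<noteq> {}"
      by (auto simp: alpha_N_def intro!: exI[of _ \<one>])
  next
    fix p assume "p \<in> alpha_N G N"
    then obtain x y where p: "p = (x, y)" "x \<in> carrier G" "y \<in> carrier G" "x \<otimes> inv y \<in> N"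
      by (auto simp: alpha_N_def)
    have "inv x \<otimes> inv (inv y) = inv x \<otimes> inv (x \<otimes> inv y) \<otimes> inv (inv x)"
      using p by (simp add: inv_mult_group m_assoc)
    also have "\<dots> \<in> N"
      using p N.inv_op_closed2[of "inv x"] by simp
    finally show "inv\<^bsub>G \<times>\<times> G\<^esub> p \<in> alpha_N G N"
      using p by (simp add: inv_DirProd[OF is_group is_group] mem_alpha_N_iff)
  next
    fix p q assume "p \<in> alpha_N G N" "q \<in> alpha_N G N"
    then obtain x y x' y' where p: "p = (x, y)" "x \<in> carrier G" "y \<in> carrier G" "x \<otimes> inv y \<in> N"
      and q: "q = (x', y')" "x' \<in> carrier G" "y' \<in> carrier G" "x' \<otimes> inv y' \<in> N"
      by (auto simp: alpha_N_def)
    have "(x \<otimes> x') \<otimes> inv (y \<otimes> y') = (x \<otimes> (x' \<otimes> inv y') \<otimes> inv x) \<otimes> (x \<otimes> inv y)"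
      using p q by (simp add: inv_mult_group m_assoc)
    also have "\<dots> \<in> N"
      using p q N.inv_op_closed2 by simp
    finally show "p \<otimes>\<^bsub>G \<times>\<times> G\<^esub> q \<in> alpha_N G N"
      using p q by (simp add: mem_alpha_N_iff)
  qed
qed

lemma (in group) group_cong_alg_alpha_N:
  "N \<lhd> G \<Longrightarrow> group (cong_alg G (alpha_N G N))"
  unfolding cong_alg_def
  using subgroup.subgroup_is_group[OF subgroup_alpha_N DirProd_group[OF is_group is_group]] .

lemma (in group) cong_alg_alpha_N_inv:
  assumes "N \<lhd> G" "(x, y) \<in> alpha_N G N"
  shows "inv\<^bsub>cong_alg G (alpha_N G N)\<^esub> (x, y) = (inv x, inv y)"
proof -
  have "inv\<^bsub>cong_alg G (alpha_N G N)\<^esub> (x, y) = inv\<^bsub>G \<times>\<times> G\<^esub> (x, y)"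
    unfolding cong_alg_def
    using group.m_inv_consistent[OF DirProd_group[OF is_group is_group] subgroup_alpha_N] assms
    by blast
  then show ?thesis
    using assms(2) by (simp add: inv_DirProd[OF is_group is_group] mem_alpha_N_iff)
qed

subsection \<open>The decomposition of \<open>G(\<alpha>\<^sub>K)\<close>\<close>

locale normal_subgroup_pair = group G for G (structure) +
  fixes K H
  assumes normal_K: "K \<lhd> G" and normal_H: "H \<lhd> G"
begin

abbreviation "C \<equiv> commutator G K H"
abbreviation "Q \<equiv> (G\<lparr>carrier := K\<rparr>) Mod C"
abbreviation "A \<equiv> cong_alg G (alpha_N G K)"

sublocale K: normal K G by (rule normal_K)
sublocale H: normal H G by (rule normal_H)
sublocale C: normal C G
  using normal_commutator normal_K normal_H .

lemma C_subset_K: "C \<subseteq> K"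
  using commutator_subset_left normal_K H.subset .

lemma carrier_Q: "carrier Q = (\<lambda>k. C #> k) ` K"
  by (auto simp: FactGroup_def RCOSETS_def r_coset_def)

lemma mult_Q: "U \<otimes>\<^bsub>Q\<^esub> V = U <#> V"
  by (simp add: FactGroup_def set_mult_def)

lemma C_rcos_eq_iff: "x \<in> carrier G \<Longrightarrow> y \<in> carrier G \<Longrightarrow> C #> x = C #> y \<longleftrightarrow> x \<otimes> inv y \<in> C"
  using rcos_eq_iff[OF C.subgroup_axioms] .

lemma H_rcos_eq_iff: "x \<in> carrier G \<Longrightarrow> y \<in> carrier G \<Longrightarrow> H #> x = H #> y \<longleftrightarrow> x \<otimes> inv y \<in> H"
  using rcos_eq_iff[OF H.subgroup_axioms] .

lemma rcos_conj_H:
  assumes h: "h \<in> H" and k: "k \<in> K"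
  shows "C #> (h \<otimes> k \<otimes> inv h) = C #> k"
proof -
  have "k \<otimes> inv (h \<otimes> k \<otimes> inv h) = inv (inv k) \<otimes> inv (inv h) \<otimes> inv k \<otimes> inv h"
    using h k by (simp add: inv_mult_group m_assoc)
  also have "\<dots> \<in> C"
    using h k by (intro commutator_mem) auto
  finally have "C #> k = C #> (h \<otimes> k \<otimes> inv h)"
    using h k C_rcos_eq_iff by simp
  then show ?thesis ..
qed

lemma rcos_conj_well_defined:
  assumes g: "g \<in> carrier G" "g' \<in> carrier G" "H #> g = H #> g'"
    and k: "k \<in> K" "k' \<in> K" "C #> k = C #> k'"
  shows "C #> (g \<otimes> k \<otimes> inv g) = C #> (g' \<otimes> k' \<otimes> inv g')"
proof -
  have "(g \<otimes> k \<otimes> inv g) \<otimes> inv (g \<otimes> k' \<otimes> inv g) = g \<otimes> (k \<otimes> inv k') \<otimes> inv g"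
    using g k by (simp add: inv_mult_group m_assoc)
  also have "\<dots> \<in> C"
    using g k C_rcos_eq_iff C.inv_op_closed2 by simp
  finally have "C #> (g \<otimes> k \<otimes> inv g) = C #> (g \<otimes> k' \<otimes> inv g)"
    using g k C_rcos_eq_iff by simp
  moreover have h: "g' \<otimes> inv g \<in> H"
    using g(1,2) g(3)[symmetric] H_rcos_eq_iff by simp
  moreover have "g' \<otimes> k' \<otimes> inv g' = (g' \<otimes> inv g) \<otimes> (g \<otimes> k' \<otimes> inv g) \<otimes> inv (g' \<otimes> inv g)"
    using g k by (simp add: inv_mult_group m_assoc)
  ultimately show ?thesis
    using rcos_conj_H[OF h K.inv_op_closed2[OF g(1) k(2)]] by simp
qed

definition conj_action :: "'a set \<Rightarrow> 'a set \<Rightarrow> 'a set" where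
  "conj_action U = (\<lambda>V\<in>carrier Q. C #> ((SOME g. g \<in> U) \<otimes> (SOME k. k \<in> V) \<otimes> inv (SOME g. g \<in> U)))"

lemma conj_action_rcos:
  assumes g: "g \<in> carrier G" and k: "k \<in> K"
  shows "conj_action (H #> g) (C #> k) = C #> (g \<otimes> k \<otimes> inv g)"
proof -
  define g0 where "g0 = (SOME x. x \<in> H #> g)"
  define k0 where "k0 = (SOME x. x \<in> C #> k)"
  have g0_mem: "g0 \<in> H #> g"
    unfolding g0_def using rcos_self[OF g H.subgroup_axioms] by (rule someI)
  then have g0: "g0 \<in> carrier G" "H #> g0 = H #> g"
    using r_coset_subset_G[OF H.subset g] repr_independence[OF g0_mem g H.subgroup_axioms] by auto
  have k_carrier: "k \<in> carrier G"
    using k K.subset by blast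
  have k0_mem: "k0 \<in> C #> k"
    unfolding k0_def using rcos_self[OF k_carrier C.subgroup_axioms] by (rule someI)
  moreover have "C #> k \<subseteq> K"
    using k C_subset_K K.m_closed by (auto simp: r_coset_def)
  ultimately have k0: "k0 \<in> K" "C #> k0 = C #> k"
    using repr_independence[OF k0_mem k_carrier C.subgroup_axioms] by auto
  have "C #> k \<in> carrier Q"
    using k unfolding carrier_Q by blast
  then have "conj_action (H #> g) (C #> k) = C #> (g0 \<otimes> k0 \<otimes> inv g0)"
    by (simp add: conj_action_def g0_def k0_def)
  also have "\<dots> = C #> (g \<otimes> k \<otimes> inv g)"
    by (rule rcos_conj_well_defined[OF g0(1) g g0(2) k0(1) k k0(2)])
  finally show ?thesis .
qed

lemma conj_action_one:
  assumes "U \<in> carrier Q"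
  shows "conj_action H U = U"
proof -
  obtain k where k: "k \<in> K" "U = C #> k"
    using assms unfolding carrier_Q by blast
  then have "conj_action H U = conj_action (H #> \<one>) (C #> k)"
    using H.subset by simp
  also have "\<dots> = C #> (\<one> \<otimes> k \<otimes> inv \<one>)"
    using k by (intro conj_action_rcos) auto
  finally show ?thesis
    using k K.subset by auto
qed

lemma conj_action_auto:
  assumes g: "g \<in> carrier G"
  shows "conj_action (H #> g) \<in> auto Q"
proof -
  have hom: "conj_action (H #> g) \<in> hom Q Q"
  proof (rule homI)
    fix U assume "U \<in> carrier Q"
    then obtain k where k: "k \<in> K" "U = C #> k"
      unfolding carrier_Q by blast
    then have "g \<otimes> k \<otimes> inv g \<in> K"
      using g K.inv_op_closed2 by blast
    then show "conj_action (H #> g) U \<in> carrier Q"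
      using g k unfolding carrier_Q by (auto simp: conj_action_rcos)
  next
    fix U V assume "U \<in> carrier Q" "V \<in> carrier Q"
    then obtain k l where kl: "k \<in> K" "U = C #> k" "l \<in> K" "V = C #> l"
      unfolding carrier_Q by blast
    have "g \<otimes> (k \<otimes> l) \<otimes> inv g = (g \<otimes> k \<otimes> inv g) \<otimes> (g \<otimes> l \<otimes> inv g)"
      using g kl by (simp add: m_assoc)
    then show "conj_action (H #> g) (U \<otimes>\<^bsub>Q\<^esub> V) = conj_action (H #> g) U \<otimes>\<^bsub>Q\<^esub> conj_action (H #> g) V"
      using g kl by (simp add: mult_Q C.rcos_sum conj_action_rcos)
  qed
  have inj: "inj_on (conj_action (H #> g)) (carrier Q)"
  proof (rule inj_onI)
    fix U V assume "U \<in> carrier Q" "V \<in> carrier Q" and e: "conj_action (H #> g) U = conj_action (H #> g) V"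
    then obtain k l where kl: "k \<in> K" "U = C #> k" "l \<in> K" "V = C #> l"
      unfolding carrier_Q by blast
    have "(g \<otimes> k \<otimes> inv g) \<otimes> inv (g \<otimes> l \<otimes> inv g) \<in> C"
      using e kl g by (simp add: conj_action_rcos C_rcos_eq_iff)
    moreover have "(g \<otimes> k \<otimes> inv g) \<otimes> inv (g \<otimes> l \<otimes> inv g) = g \<otimes> (k \<otimes> inv l) \<otimes> inv g"
      using kl g by (simp add: inv_mult_group m_assoc)
    ultimately have "inv g \<otimes> (g \<otimes> (k \<otimes> inv l) \<otimes> inv g) \<otimes> inv (inv g) \<in> C"
      using C.inv_op_closed2[of "inv g"] g by simp
    then have "k \<otimes> inv l \<in> C"
      using g kl by (simp add: m_assoc)
    then show "U = V"
      using kl C_rcos_eq_iff by simp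
  qed
  have "carrier Q \<subseteq> conj_action (H #> g) ` carrier Q"
  proof
    fix U assume "U \<in> carrier Q"
    then obtain k where k: "k \<in> K" "U = C #> k"
      unfolding carrier_Q by blast
    have k': "inv g \<otimes> k \<otimes> inv (inv g) \<in> K"
      using K.inv_op_closed2[of "inv g" k] g k by simp
    have "conj_action (H #> g) (C #> (inv g \<otimes> k \<otimes> inv (inv g))) = U"
      using k k' g by (simp add: conj_action_rcos m_assoc)
    moreover have "C #> (inv g \<otimes> k \<otimes> inv (inv g)) \<in> carrier Q"
      using k' unfolding carrier_Q by blast
    ultimately show "U \<in> conj_action (H #> g) ` carrier Q"
      by (metis image_eqI)
  qed
  then have "conj_action (H #> g) ` carrier Q = carrier Q"
    using hom by (auto simp: hom_def)
  then show ?thesis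
    using hom inj by (simp add: auto_def Bij_def bij_betw_def conj_action_def)
qed

lemma conj_action_hom: "conj_action \<in> hom (G Mod H) (AutoGroup Q)"
proof (rule homI)
  fix U assume "U \<in> carrier (G Mod H)"
  then show "conj_action U \<in> carrier (AutoGroup Q)"
    using conj_action_auto by (auto simp: carrier_FactGroup AutoGroup_def)
next
  fix U V assume "U \<in> carrier (G Mod H)" "V \<in> carrier (G Mod H)"
  then obtain x y where xy: "x \<in> carrier G" "U = H #> x" "y \<in> carrier G" "V = H #> y"
    unfolding carrier_FactGroup by blast
  have "conj_action (H #> (x \<otimes> y)) = compose (carrier Q) (conj_action U) (conj_action V)"
  proof
    fix W show "conj_action (H #> (x \<otimes> y)) W = compose (carrier Q) (conj_action U) (conj_action V) W"
    proof (cases "W \<in> carrier Q")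
      case True
      then obtain k where k: "k \<in> K" "W = C #> k"
        unfolding carrier_Q by blast
      have "x \<otimes> y \<otimes> k \<otimes> inv (x \<otimes> y) = x \<otimes> (y \<otimes> k \<otimes> inv y) \<otimes> inv x"
        using xy k by (simp add: inv_mult_group m_assoc)
      then show ?thesis
        using True xy k by (simp add: compose_def conj_action_rcos K.inv_op_closed2)
    next
      case False
      then show ?thesis
        by (simp add: compose_def conj_action_def)
    qed
  qed
  moreover have "conj_action U \<in> Bij (carrier Q)" "conj_action V \<in> Bij (carrier Q)"
    using conj_action_auto xy by (auto simp: auto_def)
  ultimately show "conj_action (U \<otimes>\<^bsub>G Mod H\<^esub> V) = conj_action U \<otimes>\<^bsub>AutoGroup Q\<^esub> conj_action V"
    using xy by (simp add: H.rcos_sum AutoGroup_def BijGroup_def)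
qed

abbreviation "T \<equiv> semidirect Q (G Mod H) conj_action"

definition decomp :: "'a \<times> 'a \<Rightarrow> 'a set \<times> 'a set" where
  "decomp p = (C #> (fst p \<otimes> inv (snd p)), H #> snd p)"

lemma decomp_hom: "decomp \<in> hom A T"
proof (rule homI)
  fix p assume "p \<in> carrier A"
  then obtain x y where "p = (x, y)" "x \<in> carrier G" "y \<in> carrier G" "x \<otimes> inv y \<in> K"
    by (auto simp: alpha_N_def)
  then show "decomp p \<in> carrier T"
    by (auto simp: semidirect_def decomp_def carrier_Q carrier_FactGroup)
next
  fix p q assume "p \<in> carrier A" "q \<in> carrier A"
  then obtain x y x' y' where p: "p = (x, y)" "x \<in> carrier G" "y \<in> carrier G" "x \<otimes> inv y \<in> K"
    and q: "q = (x', y')" "x' \<in> carrier G" "y' \<in> carrier G" "x' \<otimes> inv y' \<in> K"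
    by (auto simp: alpha_N_def)
  have conj: "y \<otimes> (x' \<otimes> inv y') \<otimes> inv y \<in> K"
    using p q K.inv_op_closed2 by simp
  have "(x \<otimes> x') \<otimes> inv (y \<otimes> y') = (x \<otimes> inv y) \<otimes> (y \<otimes> (x' \<otimes> inv y') \<otimes> inv y)"
    using p q by (simp add: inv_mult_group m_assoc)
  then have "decomp (p \<otimes>\<^bsub>A\<^esub> q) = (C #> ((x \<otimes> inv y) \<otimes> (y \<otimes> (x' \<otimes> inv y') \<otimes> inv y)), H #> (y \<otimes> y'))"
    using p q by (simp add: decomp_def)
  also have "\<dots> = ((C #> (x \<otimes> inv y)) <#> conj_action (H #> y) (C #> (x' \<otimes> inv y')), (H #> y) <#> (H #> y'))"
    using p q conj by (simp add: conj_action_rcos C.rcos_sum H.rcos_sum)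
  also have "\<dots> = decomp p \<otimes>\<^bsub>T\<^esub> decomp q"
    using p q by (simp add: semidirect_def decomp_def mult_Q)
  finally show "decomp (p \<otimes>\<^bsub>A\<^esub> q) = decomp p \<otimes>\<^bsub>T\<^esub> decomp q" .
qed

lemma decomp_surj: "decomp ` carrier A = carrier T"
proof
  show "decomp ` carrier A \<subseteq> carrier T"
    using decomp_hom by (auto simp: hom_def)
next
  show "carrier T \<subseteq> decomp ` carrier A"
  proof
    fix t assume "t \<in> carrier T"
    then obtain k g where t: "k \<in> K" "g \<in> carrier G" "t = (C #> k, H #> g)"
      unfolding semidirect_def carrier_Q carrier_FactGroup by auto
    then have "(k \<otimes> g, g) \<in> carrier A" "decomp (k \<otimes> g, g) = t"
      by (simp_all add: mem_alpha_N_iff decomp_def m_assoc)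
    then show "t \<in> decomp ` carrier A"
      by (metis image_eqI)
  qed
qed

abbreviation "diagonal_pairs \<equiv> {((u, u), (v, v)) | u v. (u, v) \<in> alpha_N G H}"

lemma diagonal_pairs_subset_kernel_rel: "diagonal_pairs \<subseteq> kernel_rel A decomp"
proof
  fix z assume "z \<in> diagonal_pairs"
  then obtain u v where z: "z = ((u, u), (v, v))" and uv: "(u, v) \<in> alpha_N G H"
    by blast
  then have "(u, u) \<in> alpha_N G K" "(v, v) \<in> alpha_N G K" "H #> u = H #> v"
    using H_rcos_eq_iff by (auto simp: mem_alpha_N_iff K.one_closed)
  then show "z \<in> kernel_rel A decomp"
    using uv unfolding z by (simp add: kernel_rel_def decomp_def alpha_N_def)
qed

context
  fixes R assumes R: "grp_cong A R" and diagonal_R: "diagonal_pairs \<subseteq> R"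
begin

lemma R_mult: "(a, b) \<in> R \<Longrightarrow> (c, d) \<in> R \<Longrightarrow> (a \<otimes>\<^bsub>A\<^esub> c, b \<otimes>\<^bsub>A\<^esub> d) \<in> R"
  using R unfolding grp_cong_def by blast

lemma R_refl: "a \<in> alpha_N G K \<Longrightarrow> (a, a) \<in> R"
  using R unfolding grp_cong_def by (simp add: equiv_def refl_on_def)

lemma diagonal_R_one: "u \<in> H \<Longrightarrow> ((u, u), (\<one>, \<one>)) \<in> R"
  using diagonal_R by (force simp: alpha_N_def)

lemma commutator_pairs_in_R:
  assumes c: "c \<in> C"
  shows "((c, \<one>), (\<one>, \<one>)) \<in> R"
proof -
  define S where "S = {c \<in> K. ((c, \<one>), (\<one>, \<one>)) \<in> R}"
  have "subgroup S G"
  proof (rule subgroupI)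
    show "S \<subseteq> carrier G" "S \<noteq> {}"
      using R_refl[of "(\<one>, \<one>)"] by (auto simp: S_def mem_alpha_N_iff intro!: exI[of _ \<one>])
  next
    fix c assume "c \<in> S"
    then have c: "c \<in> K" "((c, \<one>), (\<one>, \<one>)) \<in> R"
      by (auto simp: S_def)
    then have "((inv\<^bsub>A\<^esub> (c, \<one>)), inv\<^bsub>A\<^esub> (\<one>, \<one>)) \<in> R"
      using R unfolding grp_cong_def by blast
    then show "inv c \<in> S"
      using c by (simp add: S_def cong_alg_alpha_N_inv[OF normal_K] mem_alpha_N_iff)
  next
    fix c d assume "c \<in> S" "d \<in> S"
    then show "c \<otimes> d \<in> S"
      using R_mult[of "(c, \<one>)" "(\<one>, \<one>)" "(d, \<one>)" "(\<one>, \<one>)"] by (auto simp: S_def)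
  qed
  moreover have "inv k \<otimes> inv h \<otimes> k \<otimes> h \<in> S" if k: "k \<in> K" and h: "h \<in> H" for k h
  proof -
    have inv_k: "(inv k, \<one>) \<in> alpha_N G K" and k_pair: "(k, \<one>) \<in> alpha_N G K"
      using k by (simp_all add: mem_alpha_N_iff K.m_inv_closed)
    have "((((inv k, \<one>) \<otimes>\<^bsub>A\<^esub> (inv h, inv h)) \<otimes>\<^bsub>A\<^esub> (k, \<one>)) \<otimes>\<^bsub>A\<^esub> (h, h),
           (((inv k, \<one>) \<otimes>\<^bsub>A\<^esub> (\<one>, \<one>)) \<otimes>\<^bsub>A\<^esub> (k, \<one>)) \<otimes>\<^bsub>A\<^esub> (\<one>, \<one>)) \<in> R"
      by (rule R_mult[OF R_mult[OF R_mult[OF R_refl[OF inv_k] diagonal_R_one[OF H.m_inv_closed[OF h]]]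
          R_refl[OF k_pair]] diagonal_R_one[OF h]])
    moreover have "inv k \<otimes> inv h \<otimes> k \<otimes> h \<in> K"
      using C_subset_K commutator_mem[OF k h] ..
    ultimately show ?thesis
      using k h by (simp add: S_def m_assoc)
  qed
  ultimately have "C \<subseteq> S"
    by (rule commutator_subset_subgroup)
  then show ?thesis
    using c by (auto simp: S_def)
qed

lemma kernel_rel_decomp_subset: "kernel_rel A decomp \<subseteq> R"
proof
  fix z assume "z \<in> kernel_rel A decomp"
  then obtain x1 y1 x2 y2 where z: "z = ((x1, y1), (x2, y2))"
    and p1: "x1 \<in> carrier G" "y1 \<in> carrier G" "x1 \<otimes> inv y1 \<in> K"
    and p2: "x2 \<in> carrier G" "y2 \<in> carrier G" "x2 \<otimes> inv y2 \<in> K"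
    and e: "C #> (x1 \<otimes> inv y1) = C #> (x2 \<otimes> inv y2)" "H #> y1 = H #> y2"
    by (auto simp: kernel_rel_def alpha_N_def decomp_def)
  \<comment> \<open>\<open>(x1, y1) = (c, 1)(x2, y2)(u, u)\<close> with \<open>c \<in> [K,H]\<close> and \<open>u \<in> H\<close>\<close>
  define c where "c = (x1 \<otimes> inv y1) \<otimes> inv (x2 \<otimes> inv y2)"
  define u where "u = inv y2 \<otimes> y1"
  have c_C: "c \<in> C"
    using e p1 p2 C_rcos_eq_iff c_def by simp
  have "inv y2 \<otimes> (y1 \<otimes> inv y2) \<otimes> inv (inv y2) \<in> H"
    using e p1 p2 H_rcos_eq_iff H.inv_op_closed2[of "inv y2"] by simp
  then have u_H: "u \<in> H"
    using p1 p2 by (simp add: u_def m_assoc)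
  have rel: "(((c, \<one>) \<otimes>\<^bsub>A\<^esub> (x2, y2)) \<otimes>\<^bsub>A\<^esub> (u, u), ((\<one>, \<one>) \<otimes>\<^bsub>A\<^esub> (x2, y2)) \<otimes>\<^bsub>A\<^esub> (\<one>, \<one>)) \<in> R"
    using p2 by (intro R_mult[OF R_mult[OF commutator_pairs_in_R[OF c_C] R_refl] diagonal_R_one[OF u_H]])
      (simp add: mem_alpha_N_iff)
  have "((c, \<one>) \<otimes>\<^bsub>A\<^esub> (x2, y2)) \<otimes>\<^bsub>A\<^esub> (u, u) = (x1, y1)"
    using p1 p2 by (simp add: c_def u_def m_assoc inv_mult_group)
  moreover have "((\<one>, \<one>) \<otimes>\<^bsub>A\<^esub> (x2, y2)) \<otimes>\<^bsub>A\<^esub> (\<one>, \<one>) = (x2, y2)"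
    using p2 by simp
  ultimately show "z \<in> R"
    using rel unfolding z by (simp only:)
qed

end

lemma Delta_eq_kernel_rel: "Delta G (alpha_N G K) (alpha_N G H) = kernel_rel A decomp"
  unfolding Delta_def
  using grp_cong_kernel_rel[OF group_cong_alg_alpha_N[OF normal_K] decomp_hom]
    diagonal_pairs_subset_kernel_rel kernel_rel_decomp_subset
  by (intro cong_gen_eqI)

lemma quot_Delta_iso_semidirect: "quot_alg A (Delta G (alpha_N G K) (alpha_N G H)) \<cong> T"
  unfolding Delta_eq_kernel_rel
  using quot_alg_kernel_rel_iso[OF group_cong_alg_alpha_N[OF normal_K] decomp_hom decomp_surj] .

end

lemma (in group) carrier_FactGroup_self: "carrier (G Mod carrier G) = {\<one>\<^bsub>G Mod carrier G\<^esub>}"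
  by (auto simp: carrier_FactGroup subgroup.rcos_const[OF subgroup_self is_group])

lemma iso_semidirect_trivial:
  assumes P: "carrier P = {\<one>\<^bsub>P\<^esub>}" and \<phi>: "\<And>b. b \<in> carrier N \<Longrightarrow> \<phi> \<one>\<^bsub>P\<^esub> b = b"
  shows "semidirect N P \<phi> \<cong> N"
proof -
  have "fst \<in> hom (semidirect N P \<phi>) N"
    by (rule homI) (auto simp: semidirect_def P \<phi>)
  moreover have "bij_betw fst (carrier (semidirect N P \<phi>)) (carrier N)"
    by (auto simp: semidirect_def P bij_betw_def inj_on_def)
  ultimately show ?thesis
    unfolding is_iso_def iso_def by blast
qed

theorem lemma2p9:
  fixes G :: "('a, 'b) monoid_scheme" and K H :: "'a set"
  assumes "group G" and "K \<lhd> G" and "H \<lhd> G" and "K \<subseteq> H"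
  shows "(\<exists>\<phi>. \<phi> \<in> hom (G Mod H) (AutoGroup ((G\<lparr>carrier := K\<rparr>) Mod commutator G K H))
              \<and> quot_alg (cong_alg G (alpha_N G K)) (Delta G (alpha_N G K) (alpha_N G H))
                  \<cong> semidirect ((G\<lparr>carrier := K\<rparr>) Mod commutator G K H) (G Mod H) \<phi>)
       \<and> quot_alg (cong_alg G (alpha_N G K)) (Delta G (alpha_N G K) (total_cong G))
           \<cong> (G\<lparr>carrier := K\<rparr>) Mod commutator G K (carrier G)"
proof
  interpret KH: normal_subgroup_pair G K H
    using assms by (simp add: normal_subgroup_pair_def normal_subgroup_pair_axioms_def)
  show "\<exists>\<phi>. \<phi> \<in> hom (G Mod H) (AutoGroup KH.Q)
      \<and> quot_alg KH.A (Delta G (alpha_N G K) (alpha_N G H)) \<cong> semidirect KH.Q (G Mod H) \<phi>"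
    using KH.conj_action_hom KH.quot_Delta_iso_semidirect by blast
next
  interpret G: group G by fact
  interpret KG: normal_subgroup_pair G K "carrier G"
    using assms G.normal_self by (simp add: normal_subgroup_pair_def normal_subgroup_pair_axioms_def)
  have "KG.T \<cong> KG.Q"
  proof (rule iso_semidirect_trivial)
    show "carrier (G Mod carrier G) = {\<one>\<^bsub>G Mod carrier G\<^esub>}"
      by (rule G.carrier_FactGroup_self)
    show "KG.conj_action \<one>\<^bsub>G Mod carrier G\<^esub> U = U" if "U \<in> carrier KG.Q" for U
      using KG.conj_action_one[OF that] by simp
  qed
  moreover have "total_cong G = alpha_N G (carrier G)"
    by (auto simp: total_cong_def alpha_N_def)
  ultimately show "quot_alg KG.A (Delta G (alpha_N G K) (total_cong G)) \<cong> KG.Q"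
    using iso_trans[OF KG.quot_Delta_iso_semidirect] by simp
qed

end
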